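(* For all positive integers $m,n$, $\Lambda(m,n)=\left([0,1)^{m\times n}\times[0,1)^m\right)\setminus\mathbf{Bad}(m,n)$.
   Context: $[0,1)^{m\times n}$ is the set of real $m\times n$ matrices with entries in $[0,1)$. For $\boldsymbol{x}\in\mathbb{R}^n$, $\|\boldsymbol{x}\|=\max_i|x_i|$; for $\boldsymbol{y}\in\mathbb{R}^m$, $\langle\boldsymbol{y}\rangle=\min_{\boldsymbol{p}\in\mathbb{Z}^m}\|\boldsymbol{y}-\boldsymbol{p}\|$. For $\psi:\mathbb{N}\to[0,\infty)$, $W_{m,n}(\psi)$ is the set of pairs $(A,\boldsymbol{\gamma})\in[0,1)^{m\times n}\times[0,1)^m$ such that $\langle A\boldsymbol{q}-\boldsymbol{\gamma}\rangle<\psi(\|\boldsymbol{q}\|)$ for infinitely many $\boldsymbol{q}\in\mathbb{Z}^n$. "Decreasing" means non-increasing. $\mathcal{C}$ is the set of decreasing $\psi:\mathbb{N}\to[0,\infty)$ with $\sum_{q\ge1}q^{n-1}\psi(q)^m<\infty$. $\Lambda(m,n)=\bigcup_{\psi\in\mathcal{C}}W_{m,n}(\psi)$. $\mathbf{Bad}(m,n)=\{(A,\boldsymbol{\gamma})\in[0,1)^{m\times n}\times[0,1)^m:\liminf_{\boldsymbol{q}\in\mathbb{Z}^n,\|\boldsymbol{q}\|\to\infty}\|\boldsymbol{q}\|^n\langle A\boldsymbol{q}-\boldsymbol{\gamma}\rangle^m>0\}$. *)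

theory Defs
  imports "HOL-Analysis.Analysis"
begin

definition maxnorm :: "real^'n \<Rightarrow> real" where
  "maxnorm x = Max (range (\<lambda>i. \<bar>x $ i\<bar>))"

definition int_maxnorm :: "int^'n \<Rightarrow> nat" where
  "int_maxnorm q = Max (range (\<lambda>i. nat \<bar>q $ i\<bar>))"

definition int_to_real_vec :: "int^'n \<Rightarrow> real^'n" where
  "int_to_real_vec q = (\<chi> i. real_of_int (q $ i))"

definition dist_Zm :: "real^'m \<Rightarrow> real" where
  "dist_Zm y = (INF p\<in>(UNIV :: (int^'m) set). maxnorm (y - int_to_real_vec p))"

definition unit_matrices :: "(real^'n^'m) set" where
  "unit_matrices = {A. \<forall>i j. 0 \<le> A $ i $ j \<and> A $ i $ j < 1}"

definition unit_vectors :: "(real^'m) set" where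
  "unit_vectors = {g. \<forall>i. 0 \<le> g $ i \<and> g $ i < 1}"

definition W_set :: "(nat \<Rightarrow> real) \<Rightarrow> ((real^'n^'m) \<times> (real^'m)) set" where
  "W_set \<psi> = {(A, \<gamma>). A \<in> unit_matrices \<and> \<gamma> \<in> unit_vectors \<and>
      infinite {q :: int^'n. dist_Zm (A *v int_to_real_vec q - \<gamma>) < \<psi> (int_maxnorm q)}}"

text \<open>The class C: psi on N = {1,2,...} (value at 0 irrelevant), non-negative,
  non-increasing, with sum_{q>=1} q^(n-1) psi(q)^m < infinity.\<close>
definition class_C :: "nat \<Rightarrow> nat \<Rightarrow> (nat \<Rightarrow> real) set" where
  "class_C m n = {\<psi>. (\<forall>q\<ge>1. 0 \<le> \<psi> q) \<and> (\<forall>a b. 1 \<le> a \<longrightarrow> a \<le> b \<longrightarrow> \<psi> b \<le> \<psi> a) \<and>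
      summable (\<lambda>k. real (Suc k) ^ (n - 1) * \<psi> (Suc k) ^ m)}"

definition Lambda_set :: "((real^'n^'m) \<times> (real^'m)) set" where
  "Lambda_set = (\<Union>\<psi>\<in>class_C CARD('m) CARD('n). W_set \<psi>)"

definition Bad_set :: "((real^'n^'m) \<times> (real^'m)) set" where
  "Bad_set = {(A, \<gamma>). A \<in> unit_matrices \<and> \<gamma> \<in> unit_vectors \<and>
      Liminf (filtercomap int_maxnorm at_top)
        (\<lambda>q :: int^'n. ereal (real (int_maxnorm q) ^ CARD('n) *
           dist_Zm (A *v int_to_real_vec q - \<gamma>) ^ CARD('m))) > 0}"

end

theory Submission
  imports Defs
begin

text \<open>If \<psi> is decreasing, the block \<Sum>{q/2 \<le> k < q} k^(n-1) \<psi>(k)^m of the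
  convergent series dominates 2^(-n) q^n \<psi>(q)^m, so q^n \<psi>(q)^m \<rightarrow> 0. A pair in W(\<psi>)
  therefore makes |q|^n <Aq - \<gamma>>^m arbitrarily small for infinitely many, hence
  arbitrarily large, q, and is not badly approximable. Conversely, if the liminf is 0,
  choose q_k with strictly increasing norms N_k and N_k^n <Aq_k - \<gamma>>^m < 2^(-k), and
  let \<psi> be the step function equal to (2^(-k) / N_k^n)^(1/m) on the block
  (N_(k-1), N_k]. This block contributes at most N_k N_k^(n-1) \<psi>(N_k)^m = 2^(-k) to
  the series, so \<psi> lies in C, and each q_k satisfies <Aq_k - \<gamma>> < \<psi>(N_k).\<close>

lemma Liminf_ereal_gt_0_iff:
  fixes g :: "'a \<Rightarrow> real"
  shows "0 < Liminf F (\<lambda>x. ereal (g x)) \<longleftrightarrow> (\<exists>e>0. \<forall>\<^sub>F x in F. e \<le> g x)"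
proof
  assume "0 < Liminf F (\<lambda>x. ereal (g x))"
  then obtain e where e: "0 < ereal e" "ereal e < Liminf F (\<lambda>x. ereal (g x))"
    using ereal_dense2 by blast
  have "\<forall>\<^sub>F x in F. e \<le> g x"
    by (rule eventually_mono[OF less_LiminfD[OF e(2)]]) simp
  with e(1) show "\<exists>e>0. \<forall>\<^sub>F x in F. e \<le> g x" by auto
next
  assume "\<exists>e>0. \<forall>\<^sub>F x in F. e \<le> g x"
  then obtain e where "0 < e" "\<forall>\<^sub>F x in F. e \<le> g x" by blast
  then have "ereal e \<le> Liminf F (\<lambda>x. ereal (g x))"
    by (intro Liminf_bounded) simp
  with \<open>0 < e\<close> show "0 < Liminf F (\<lambda>x. ereal (g x))"
    using ereal_less(2) order_less_le_trans by blast
qed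

lemma frequently_filtercomap_at_top_linorder:
  fixes f :: "'a \<Rightarrow> 'b::linorder"
  shows "(\<exists>\<^sub>F x in filtercomap f at_top. P x) \<longleftrightarrow> (\<forall>N. \<exists>x. N \<le> f x \<and> P x)"
  unfolding frequently_def eventually_filtercomap_at_top_linorder by auto

lemma frequently_less_imp_strict_mono_sequence:
  fixes f :: "'a \<Rightarrow> nat" and g :: "'a \<Rightarrow> real" and \<epsilon> :: "nat \<Rightarrow> real"
  assumes "\<And>e. 0 < e \<Longrightarrow> \<exists>\<^sub>F x in filtercomap f at_top. g x < e"
    and "\<And>k. 0 < \<epsilon> k"
  obtains xs where "strict_mono (f \<circ> xs)" "0 < f (xs 0)" "\<And>k. g (xs k) < \<epsilon> k"
proof -
  have choice: "\<exists>x. N \<le> f x \<and> g x < \<epsilon> k" for N k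
    using assms unfolding frequently_filtercomap_at_top_linorder by blast
  have "\<exists>xs. \<forall>k. (0 < f (xs k) \<and> g (xs k) < \<epsilon> k) \<and> f (xs k) < f (xs (Suc k))"
  proof (rule dependent_nat_choice)
    show "\<exists>x. 0 < f x \<and> g x < \<epsilon> 0"
      using choice[of 1 0] by (auto simp: Suc_le_eq)
    show "\<exists>y. (0 < f y \<and> g y < \<epsilon> (Suc k)) \<and> f x < f y" for x k
    proof -
      obtain y where "Suc (f x) \<le> f y" "g y < \<epsilon> (Suc k)"
        using choice by blast
      then show ?thesis by (intro exI[of _ y]) auto
    qed
  qed
  then obtain xs where "\<And>k. 0 < f (xs k) \<and> g (xs k) < \<epsilon> k" "\<And>k. f (xs k) < f (xs (Suc k))"
    by blast
  then show ?thesis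
    by (intro that) (auto simp: strict_mono_Suc_iff)
qed

lemma half_power_mult_le_block_sum:
  fixes f :: "nat \<Rightarrow> real"
  assumes nonneg: "\<And>k. 1 \<le> k \<Longrightarrow> 0 \<le> f k"
    and antimono: "\<And>a b. 1 \<le> a \<Longrightarrow> a \<le> b \<Longrightarrow> f b \<le> f a"
    and "1 \<le> n"
  shows "(real q / 2) ^ n * f q \<le> (\<Sum>k\<in>{q div 2..<q}. real (Suc k) ^ (n - 1) * f (Suc k))"
proof (cases "q = 0")
  case False
  have fq: "0 \<le> f q" using False nonneg by simp
  have termwise: "(real q / 2) ^ (n - 1) * f q \<le> real (Suc k) ^ (n - 1) * f (Suc k)"
    if "k \<in> {q div 2..<q}" for k
    using that fq by (intro mult_mono power_mono antimono) auto
  have "(real q / 2) ^ n * f q = real q / 2 * ((real q / 2) ^ (n - 1) * f q)"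
    using \<open>1 \<le> n\<close> by (simp add: power_eq_if)
  also have "\<dots> \<le> real (card {q div 2..<q}) * ((real q / 2) ^ (n - 1) * f q)"
    using fq by (intro mult_right_mono) auto
  also have "\<dots> \<le> (\<Sum>k\<in>{q div 2..<q}. real (Suc k) ^ (n - 1) * f (Suc k))"
    using sum_mono[OF termwise] by (simp only: sum_constant)
  finally show ?thesis .
qed (use \<open>1 \<le> n\<close> in \<open>simp add: power_0_left\<close>)

lemma antimono_summable_power_mult_tendsto_0:
  fixes f :: "nat \<Rightarrow> real"
  assumes nonneg: "\<And>k. 1 \<le> k \<Longrightarrow> 0 \<le> f k"
    and antimono: "\<And>a b. 1 \<le> a \<Longrightarrow> a \<le> b \<Longrightarrow> f b \<le> f a"
    and "1 \<le> n"
    and summable: "summable (\<lambda>k. real (Suc k) ^ (n - 1) * f (Suc k))"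
  shows "(\<lambda>q. real q ^ n * f q) \<longlonglongrightarrow> 0"
proof -
  define a where "a k = real (Suc k) ^ (n - 1) * f (Suc k)" for k
  have partial_sums: "(\<lambda>q. \<Sum>k<q. a k) \<longlonglongrightarrow> suminf a"
    using summable unfolding a_def by (rule summable_LIMSEQ)
  have "(\<lambda>q. (\<Sum>k<q. a k) - (\<Sum>k<q div 2. a k)) \<longlonglongrightarrow> suminf a - suminf a"
    by (intro tendsto_diff partial_sums
        filterlim_compose[OF partial_sums filterlim_at_top_div_const_nat]) simp
  moreover have "(\<Sum>k<q. a k) - (\<Sum>k<q div 2. a k) = (\<Sum>k\<in>{q div 2..<q}. a k)" for q
    using sum_diff_nat_ivl[of 0 "q div 2" q a] by (simp add: atLeast0LessThan)
  ultimately have upper: "(\<lambda>q. 2 ^ n * (\<Sum>k\<in>{q div 2..<q}. a k)) \<longlonglongrightarrow> 0"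
    by (simp add: tendsto_mult_right_zero)
  have bound: "real q ^ n * f q \<le> 2 ^ n * (\<Sum>k\<in>{q div 2..<q}. a k)" for q
  proof -
    have "real q ^ n * f q = 2 ^ n * ((real q / 2) ^ n * f q)"
      by (simp add: power_divide)
    also have "\<dots> \<le> 2 ^ n * (\<Sum>k\<in>{q div 2..<q}. a k)"
      using half_power_mult_le_block_sum[OF nonneg antimono \<open>1 \<le> n\<close>, where q = q]
      by (intro mult_left_mono) (simp_all add: a_def)
    finally show ?thesis .
  qed
  have "\<forall>\<^sub>F q in sequentially. 0 \<le> real q ^ n * f q"
    using eventually_ge_at_top[of 1] by eventually_elim (simp add: nonneg)
  then show ?thesis
    by (rule tendsto_sandwich[OF _ _ tendsto_const upper]) (simp add: bound)
qed

lemma class_C_power_mult_tendsto_0: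
  assumes "\<psi> \<in> class_C m n" "1 \<le> n"
  shows "(\<lambda>q. real q ^ n * \<psi> q ^ m) \<longlonglongrightarrow> 0"
  using assms unfolding class_C_def
  by (intro antimono_summable_power_mult_tendsto_0) (auto intro: power_mono)

definition block_index :: "(nat \<Rightarrow> nat) \<Rightarrow> nat \<Rightarrow> nat" where
  "block_index N q = (LEAST k. q \<le> N k)"

lemma block_index_le: "q \<le> N k \<Longrightarrow> block_index N q \<le> k"
  unfolding block_index_def by (rule Least_le)

lemma le_block_index: "strict_mono N \<Longrightarrow> q \<le> N (block_index N q)"
  unfolding block_index_def by (rule LeastI[of _ q]) (rule seq_suble)

lemma block_index_eqI:
  assumes "strict_mono N" "q \<le> N k" "\<And>l. l < k \<Longrightarrow> N l < q"
  shows "block_index N q = k"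
  using block_index_le[of q N k, OF assms(2)] le_block_index[OF assms(1), of q]
    assms(3)[of "block_index N q"]
  by fastforce

lemma block_index_at: "strict_mono N \<Longrightarrow> block_index N (N k) = k"
  by (rule block_index_eqI) (auto dest: strict_monoD)

lemma block_index_mono: "strict_mono N \<Longrightarrow> q \<le> q' \<Longrightarrow> block_index N q \<le> block_index N q'"
  by (rule block_index_le) (use le_block_index[of N q'] in simp)

lemma block_step_sum_le:
  fixes N :: "nat \<Rightarrow> nat" and c :: "nat \<Rightarrow> real"
  assumes "strict_mono N" "0 < N k" "\<And>l. l < k \<Longrightarrow> N l \<le> j"
    and "0 \<le> c k" "real (N k) ^ n * c k ^ m \<le> e" "1 \<le> n"
  shows "(\<Sum>i\<in>{j..<N k}. real (Suc i) ^ (n - 1) * c (block_index N (Suc i)) ^ m) \<le> e"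
proof -
  have e_nonneg: "0 \<le> e"
    by (rule order.trans[OF _ assms(5)]) (simp add: \<open>0 \<le> c k\<close>)
  have "real (Suc i) ^ (n - 1) * c (block_index N (Suc i)) ^ m \<le> e / real (N k)"
    if "i \<in> {j..<N k}" for i
  proof -
    have "block_index N (Suc i) = k"
      using that assms(3) by (intro block_index_eqI[OF assms(1)]) fastforce+
    then have "real (Suc i) ^ (n - 1) * c (block_index N (Suc i)) ^ m
        \<le> real (N k) ^ (n - 1) * c k ^ m"
      using that \<open>0 \<le> c k\<close> by (simp add: mult_right_mono power_mono)
    also have "\<dots> = real (N k) ^ n * c k ^ m / real (N k)"
      using \<open>1 \<le> n\<close> \<open>0 < N k\<close> by (cases n) simp_all
    also have "\<dots> \<le> e / real (N k)"
      using assms(5) by (simp add: divide_right_mono)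
    finally show ?thesis .
  qed
  then have "(\<Sum>i\<in>{j..<N k}. real (Suc i) ^ (n - 1) * c (block_index N (Suc i)) ^ m)
      \<le> real (card {j..<N k}) * (e / real (N k))"
    using sum_mono[of "{j..<N k}" _ "\<lambda>_. e / real (N k)"] by simp
  also have "\<dots> \<le> real (N k) * (e / real (N k))"
    using e_nonneg by (intro mult_right_mono) auto
  finally show ?thesis using \<open>0 < N k\<close> by simp
qed

lemma summable_block_step:
  fixes N :: "nat \<Rightarrow> nat" and c \<epsilon> :: "nat \<Rightarrow> real"
  assumes N: "strict_mono N" "0 < N 0"
    and c: "\<And>k. 0 \<le> c k" "\<And>k. real (N k) ^ n * c k ^ m \<le> \<epsilon> k"
    and "summable \<epsilon>" "1 \<le> n"
  shows "summable (\<lambda>i. real (Suc i) ^ (n - 1) * c (block_index N (Suc i)) ^ m)"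
proof -
  define a where "a i = real (Suc i) ^ (n - 1) * c (block_index N (Suc i)) ^ m" for i
  have N_pos: "0 < N k" for k
    using N strict_mono_leD[OF N(1), of 0 k] by simp
  have a_nonneg: "0 \<le> a i" for i
    unfolding a_def using c(1) by simp
  have block: "(\<Sum>i\<in>{j..<N k}. a i) \<le> \<epsilon> k" if "\<And>l. l < k \<Longrightarrow> N l \<le> j" for j k
    unfolding a_def using N(1) N_pos that c \<open>1 \<le> n\<close> by (rule block_step_sum_le)
  have partial_sums: "(\<Sum>i<N K. a i) \<le> (\<Sum>k\<le>K. \<epsilon> k)" for K
  proof (induction K)
    case 0
    show ?case using block[of 0 0] by (simp add: atLeast0LessThan)
  next
    case (Suc K)
    have "N K \<le> N (Suc K)" using strict_mono_leD[OF N(1)] by simp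
    then have "(\<Sum>i<N (Suc K). a i) = (\<Sum>i<N K. a i) + (\<Sum>i\<in>{N K..<N (Suc K)}. a i)"
      using sum.atLeastLessThan_concat[of 0 "N K" "N (Suc K)" a] by (simp add: atLeast0LessThan)
    also have "\<dots> \<le> (\<Sum>k\<le>K. \<epsilon> k) + \<epsilon> (Suc K)"
      using Suc.IH block[of "Suc K" "N K"] strict_mono_leD[OF N(1)] by (intro add_mono) auto
    finally show ?case by simp
  qed
  have \<epsilon>_nonneg: "0 \<le> \<epsilon> k" for k
    by (rule order.trans[OF _ c(2)]) (simp add: c(1))
  show ?thesis
    unfolding a_def[symmetric]
  proof (rule summableI_nonneg_bounded[OF a_nonneg])
    fix M
    have "(\<Sum>i<M. a i) \<le> (\<Sum>i<N M. a i)"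
      using seq_suble[OF N(1), of M] a_nonneg by (intro sum_mono2) auto
    also have "\<dots> \<le> (\<Sum>k\<le>M. \<epsilon> k)" by (rule partial_sums)
    also have "\<dots> \<le> suminf \<epsilon>"
      by (rule sum_le_suminf[OF \<open>summable \<epsilon>\<close>]) (auto simp: \<epsilon>_nonneg)
    finally show "(\<Sum>i<M. a i) \<le> suminf \<epsilon>" .
  qed
qed

lemma class_C_prescribed_values:
  fixes N :: "nat \<Rightarrow> nat" and \<epsilon> :: "nat \<Rightarrow> real"
  assumes N: "strict_mono N" "0 < N 0"
    and \<epsilon>: "\<And>k. 0 \<le> \<epsilon> k" "decseq \<epsilon>" "summable \<epsilon>"
    and "1 \<le> m" "1 \<le> n"
  shows "\<exists>\<psi>\<in>class_C m n. \<forall>k. real (N k) ^ n * \<psi> (N k) ^ m = \<epsilon> k"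
proof -
  define c where "c k = root m (\<epsilon> k / real (N k) ^ n)" for k
  define \<psi> where "\<psi> q = c (block_index N q)" for q
  have N_pos: "0 < N k" for k
    using N strict_mono_leD[OF N(1), of 0 k] by simp
  have c_pow: "real (N k) ^ n * c k ^ m = \<epsilon> k" for k
    unfolding c_def using \<open>1 \<le> m\<close> \<epsilon>(1)[of k] N_pos[of k] by (simp add: real_root_pow_pos2)
  have c_nonneg: "0 \<le> c k" for k
    unfolding c_def using \<epsilon>(1)[of k] by (simp add: real_root_ge_zero)
  have c_antimono: "c j \<le> c i" if "i \<le> j" for i j
  proof -
    have "real (N i) ^ n \<le> real (N j) ^ n"
      using strict_mono_leD[OF N(1) that] by (intro power_mono) auto
    moreover have "\<epsilon> j \<le> \<epsilon> i" using \<epsilon>(2) that by (simp add: decseq_def)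
    ultimately show ?thesis
      unfolding c_def using \<open>1 \<le> m\<close> \<epsilon>(1)[of j] N_pos[of i] by (simp add: frac_le)
  qed
  have "\<psi> \<in> class_C m n"
    unfolding class_C_def mem_Collect_eq
  proof (intro conjI allI impI)
    show "0 \<le> \<psi> q" for q
      unfolding \<psi>_def by (rule c_nonneg)
    show "\<psi> q' \<le> \<psi> q" if "q \<le> q'" for q q'
      unfolding \<psi>_def using block_index_mono[OF N(1) that] by (rule c_antimono)
    show "summable (\<lambda>i. real (Suc i) ^ (n - 1) * \<psi> (Suc i) ^ m)"
      unfolding \<psi>_def using N c_nonneg c_pow \<epsilon>(3) \<open>1 \<le> n\<close>
      by (intro summable_block_step[where \<epsilon> = \<epsilon>]) auto
  qed
  moreover have "real (N k) ^ n * \<psi> (N k) ^ m = \<epsilon> k" for k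
    unfolding \<psi>_def block_index_at[OF N(1)] by (rule c_pow)
  ultimately show ?thesis by blast
qed

lemma maxnorm_nonneg: "0 \<le> maxnorm x"
  unfolding maxnorm_def by (rule order.trans[OF abs_ge_zero Max_ge]) auto

lemma dist_Zm_nonneg: "0 \<le> dist_Zm y"
  unfolding dist_Zm_def by (rule cINF_greatest) (auto simp: maxnorm_nonneg)

lemma finite_int_maxnorm_le: "finite {q :: int^'n. int_maxnorm q \<le> N}"
proof -
  let ?box = "vec_lambda ` (PiE UNIV (\<lambda>_. {- int N..int N})) :: (int^'n) set"
  have "{q :: int^'n. int_maxnorm q \<le> N} \<subseteq> ?box"
  proof
    fix q :: "int^'n" assume "q \<in> {q. int_maxnorm q \<le> N}"
    then have entry: "nat \<bar>q $ i\<bar> \<le> N" for i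
      using Max_ge[of "range (\<lambda>i. nat \<bar>q $ i\<bar>)"] unfolding int_maxnorm_def by force
    have "q $ i \<in> {- int N..int N}" for i using entry[of i] by auto
    then have "(\<lambda>i. q $ i) \<in> PiE UNIV (\<lambda>_. {- int N..int N})" by auto
    then show "q \<in> ?box" by (metis image_eqI vec_lambda_eta)
  qed
  moreover have "finite ?box" by (intro finite_imageI finite_PiE) auto
  ultimately show ?thesis by (rule finite_subset)
qed

lemma infinite_imp_frequently_int_maxnorm:
  assumes "infinite {q :: int^'n. P q}"
  shows "\<exists>\<^sub>F q in filtercomap int_maxnorm at_top. P q"
  unfolding frequently_filtercomap_at_top_linorder
proof
  fix N
  have "infinite ({q. P q} - {q :: int^'n. int_maxnorm q \<le> N})"
    using assms finite_int_maxnorm_le by (rule Diff_infinite_finite[rotated])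
  then obtain q where "q \<in> {q. P q} - {q. int_maxnorm q \<le> N}"
    by (metis ex_in_conv finite.emptyI)
  then show "\<exists>q. N \<le> int_maxnorm q \<and> P q" using nat_le_linear by blast
qed

lemma W_set_Int_Bad_set_empty:
  assumes "\<psi> \<in> class_C CARD('m) CARD('n)"
  shows "W_set \<psi> \<inter> (Bad_set :: ((real^'n^'m) \<times> (real^'m)) set) = {}"
proof (intro equals0I)
  fix x assume x: "x \<in> W_set \<psi> \<inter> (Bad_set :: ((real^'n^'m) \<times> (real^'m)) set)"
  obtain A \<gamma> where "x = (A, \<gamma>)" by fastforce
  with x have W: "(A, \<gamma>) \<in> W_set \<psi>" and Bad: "(A, \<gamma>) \<in> Bad_set" by auto
  define d where "d q = dist_Zm (A *v int_to_real_vec q - \<gamma>)" for q :: "int^'n"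
  let ?F = "filtercomap int_maxnorm at_top :: (int^'n) filter"
  from Bad obtain e where "0 < e"
    and large: "\<forall>\<^sub>F q in ?F. e \<le> real (int_maxnorm q) ^ CARD('n) * d q ^ CARD('m)"
    unfolding Bad_set_def d_def Liminf_ereal_gt_0_iff by auto
  have "(\<lambda>q. real q ^ CARD('n) * \<psi> q ^ CARD('m)) \<longlonglongrightarrow> 0"
    using assms by (rule class_C_power_mult_tendsto_0) (simp add: Suc_le_eq)
  then have "\<forall>\<^sub>F q in ?F. real (int_maxnorm q) ^ CARD('n) * \<psi> (int_maxnorm q) ^ CARD('m) < e"
    using \<open>0 < e\<close>
    by (intro eventually_compose_filterlim[OF order_tendstoD(2) filterlim_filtercomap])
  then have "\<forall>\<^sub>F q in ?F. \<not> d q < \<psi> (int_maxnorm q)"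
    using large
  proof eventually_elim
    case (elim q)
    show ?case
    proof
      assume "d q < \<psi> (int_maxnorm q)"
      then have "d q ^ CARD('m) \<le> \<psi> (int_maxnorm q) ^ CARD('m)"
        unfolding d_def by (intro power_mono dist_Zm_nonneg) auto
      then have "real (int_maxnorm q) ^ CARD('n) * d q ^ CARD('m)
          \<le> real (int_maxnorm q) ^ CARD('n) * \<psi> (int_maxnorm q) ^ CARD('m)"
        by (intro mult_left_mono) auto
      with elim show False by linarith
    qed
  qed
  moreover have "\<exists>\<^sub>F q in ?F. d q < \<psi> (int_maxnorm q)"
    using W unfolding W_set_def d_def by (intro infinite_imp_frequently_int_maxnorm) auto
  ultimately show False by (simp add: frequently_def)
qed

lemma not_Bad_set_imp_W_set:
  fixes A :: "real^'n^'m" and \<gamma> :: "real^'m"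
  assumes unit: "A \<in> unit_matrices" "\<gamma> \<in> unit_vectors" and "(A, \<gamma>) \<notin> Bad_set"
  shows "\<exists>\<psi>\<in>class_C CARD('m) CARD('n). (A, \<gamma>) \<in> W_set \<psi>"
proof -
  define d where "d q = dist_Zm (A *v int_to_real_vec q - \<gamma>)" for q :: "int^'n"
  have "\<not> (\<exists>e>0. \<forall>\<^sub>F q in filtercomap int_maxnorm at_top.
            e \<le> real (int_maxnorm q) ^ CARD('n) * d q ^ CARD('m))"
    using assms unfolding Bad_set_def d_def Liminf_ereal_gt_0_iff by auto
  then have "\<exists>\<^sub>F q in filtercomap int_maxnorm at_top.
          real (int_maxnorm q) ^ CARD('n) * d q ^ CARD('m) < e" if "0 < e" for e
    using that by (auto simp: not_eventually not_le)
  then obtain qs :: "nat \<Rightarrow> int^'n" where qs: "strict_mono (int_maxnorm \<circ> qs)"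
      "0 < int_maxnorm (qs 0)"
      "\<And>k. real (int_maxnorm (qs k)) ^ CARD('n) * d (qs k) ^ CARD('m) < (1/2) ^ k"
    by (rule frequently_less_imp_strict_mono_sequence[where \<epsilon> = "\<lambda>k. (1/2) ^ k"]) simp_all
  have "\<exists>\<psi>\<in>class_C CARD('m) CARD('n).
          \<forall>k. real (int_maxnorm (qs k)) ^ CARD('n) * \<psi> (int_maxnorm (qs k)) ^ CARD('m) = (1/2) ^ k"
    using class_C_prescribed_values[of "int_maxnorm \<circ> qs" "\<lambda>k. (1/2) ^ k" "CARD('m)" "CARD('n)"]
      qs(1,2)
    by (simp add: decseq_def power_decreasing Suc_le_eq)
  then obtain \<psi> where \<psi>: "\<psi> \<in> class_C CARD('m) CARD('n)"
    and \<psi>_at_qs: "\<And>k. real (int_maxnorm (qs k)) ^ CARD('n) * \<psi> (int_maxnorm (qs k)) ^ CARD('m)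
      = (1/2) ^ k"
    by blast
  have "d (qs k) < \<psi> (int_maxnorm (qs k))" for k
  proof -
    have "0 < int_maxnorm (qs k)"
      using qs(2) strict_mono_leD[OF qs(1), of 0 k] by simp
    then have "real (int_maxnorm (qs k)) ^ CARD('n) * d (qs k) ^ CARD('m)
        < real (int_maxnorm (qs k)) ^ CARD('n) * \<psi> (int_maxnorm (qs k)) ^ CARD('m)"
      using qs(3)[of k] \<psi>_at_qs[of k] by simp
    then have "d (qs k) ^ CARD('m) < \<psi> (int_maxnorm (qs k)) ^ CARD('m)"
      using \<open>0 < int_maxnorm (qs k)\<close> by (simp add: mult_less_cancel_left_pos)
    moreover have "0 \<le> \<psi> (int_maxnorm (qs k))"
      using \<psi> \<open>0 < int_maxnorm (qs k)\<close> unfolding class_C_def by simp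
    ultimately show ?thesis by (rule power_less_imp_less_base)
  qed
  then have "range qs \<subseteq> {q. d q < \<psi> (int_maxnorm q)}" by auto
  moreover have "infinite (range qs)"
    using qs(1) by (intro range_inj_infinite inj_on_imageI2[of int_maxnorm]) (rule strict_mono_imp_inj_on)
  ultimately have "infinite {q. d q < \<psi> (int_maxnorm q)}"
    using finite_subset by blast
  with \<psi> unit show ?thesis
    unfolding W_set_def d_def by blast
qed

theorem theorem1p6:
  shows "(Lambda_set :: ((real^'n^'m) \<times> (real^'m)) set)
           = (unit_matrices \<times> unit_vectors) - Bad_set"
proof (intro equalityI subsetI)
  fix x assume "x \<in> (Lambda_set :: ((real^'n^'m) \<times> (real^'m)) set)"
  then obtain \<psi> where "\<psi> \<in> class_C CARD('m) CARD('n)" "x \<in> W_set \<psi>"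
    unfolding Lambda_set_def by blast
  with W_set_Int_Bad_set_empty show "x \<in> (unit_matrices \<times> unit_vectors) - Bad_set"
    unfolding W_set_def by blast
next
  fix x assume "x \<in> (unit_matrices \<times> unit_vectors) - (Bad_set :: ((real^'n^'m) \<times> (real^'m)) set)"
  then show "x \<in> Lambda_set"
    unfolding Lambda_set_def using not_Bad_set_imp_W_set by (cases x) blast
qed

end
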